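(* Let $n,m$ be positive integers and $\mathbf a'=(a_1,\dots,a_{n+1})$, $\mathbf b'=(b_1,\dots,b_{n+1})\in\mathbb Z^{n+1}$ with $\sum_ia_i=\sum_ib_i$. Then $\mathcal F_{H(n,m)}(\mathbf a',\mathbf b')$ is integrally equivalent to $\mathcal F_{H(n,m)}(\mathrm{rev}(\mathbf b'),\mathrm{rev}(\mathbf a'))$, where $\mathrm{rev}(v_1,\dots,v_{n+1})=(v_{n+1},\dots,v_1)$.
   Context: $H(n,m)$ is the directed $(n+1)\times(m+1)$ grid graph with vertex set $\{(i,j):1\le i\le n+1,\ 0\le j\le m\}$ and edges $((i,j),(i,j+1))$ for $1\le i\le n+1$, $0\le j\le m-1$, and $((i,j),(i+1,j))$ for $1\le i\le n$, $0\le j\le m$. $\mathcal F_{H(n,m)}(\mathbf a',\mathbf b')$ is the set of nonnegative real edge weightings such that at each vertex, outflow minus inflow equals its netflow, where $(i,0)$ has netflow $a_i$, $(i,m)$ has netflow $-b_i$ ($1\le i\le n+1$), and all other vertices have netflow $0$. Two polytopes are integrally equivalent if there is an affine map restricting to a bijection between them that preserves the lattice (a bijection between the integer points of their affine spans). *)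

theory Defs
  imports Complex_Main
begin

type_synonym vert = "nat \<times> nat"
type_synonym edge = "vert \<times> vert"

definition H_vertices :: "nat \<Rightarrow> nat \<Rightarrow> vert set" where
  "H_vertices n m = {(i, j). 1 \<le> i \<and> i \<le> n + 1 \<and> j \<le> m}"

text \<open>Edge set of H(n,m); an edge is the pair (tail, head).\<close>
definition H_edges :: "nat \<Rightarrow> nat \<Rightarrow> edge set" where
  "H_edges n m =
     {((i, j), (i, j + 1)) | i j. 1 \<le> i \<and> i \<le> n + 1 \<and> j < m}
   \<union> {((i, j), (i + 1, j)) | i j. 1 \<le> i \<and> i \<le> n \<and> j \<le> m}"

definition H_netflow :: "nat \<Rightarrow> (nat \<Rightarrow> int) \<Rightarrow> (nat \<Rightarrow> int) \<Rightarrow> vert \<Rightarrow> real" where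
  "H_netflow m a b v =
     (if snd v = 0 then real_of_int (a (fst v)) else 0)
     + (if snd v = m then - real_of_int (b (fst v)) else 0)"

text \<open>The flow polytope F_{H(n,m)}(a,b): nonnegative edge weightings (as points of
  R^E, i.e. real functions on edges vanishing off the edge set) satisfying flow conservation.\<close>
definition flow_polytope_H ::
  "nat \<Rightarrow> nat \<Rightarrow> (nat \<Rightarrow> int) \<Rightarrow> (nat \<Rightarrow> int) \<Rightarrow> (edge \<Rightarrow> real) set" where
  "flow_polytope_H n m a b =
     {f. (\<forall>e. e \<notin> H_edges n m \<longrightarrow> f e = 0)
       \<and> (\<forall>e \<in> H_edges n m. 0 \<le> f e)
       \<and> (\<forall>v \<in> H_vertices n m.
            (\<Sum>e \<in> {e \<in> H_edges n m. fst e = v}. f e)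
            - (\<Sum>e \<in> {e \<in> H_edges n m. snd e = v}. f e) = H_netflow m a b v)}"

text \<open>Reversal of a vector indexed by 1..n+1.\<close>
definition rev_vec :: "nat \<Rightarrow> (nat \<Rightarrow> int) \<Rightarrow> nat \<Rightarrow> int" where
  "rev_vec n v = (\<lambda>i. v (n + 2 - i))"

definition aff_hull :: "('e \<Rightarrow> real) set \<Rightarrow> ('e \<Rightarrow> real) set" where
  "aff_hull S = {x. \<exists>(k::nat) p c. (\<forall>i<k. p i \<in> S) \<and> (\<Sum>i<k. c i) = 1
                    \<and> x = (\<lambda>e. \<Sum>i<k. c i * p i e)}"

definition int_points :: "('e \<Rightarrow> real) set" where
  "int_points = {x. \<forall>e. x e \<in> \<int>}"

definition affine_map_on :: "'e set \<Rightarrow> (('e \<Rightarrow> real) \<Rightarrow> ('e \<Rightarrow> real)) \<Rightarrow> bool" where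
  "affine_map_on E \<phi> \<longleftrightarrow> (\<exists>c L. \<forall>x. \<phi> x = (\<lambda>e. c e + (\<Sum>e' \<in> E. L e e' * x e')))"

definition integrally_equivalent ::
  "'e set \<Rightarrow> ('e \<Rightarrow> real) set \<Rightarrow> ('e \<Rightarrow> real) set \<Rightarrow> bool" where
  "integrally_equivalent E P Q \<longleftrightarrow>
     (\<exists>\<phi>. affine_map_on E \<phi> \<and> bij_betw \<phi> P Q
          \<and> bij_betw \<phi> (aff_hull P \<inter> int_points) (aff_hull Q \<inter> int_points))"

end

theory Submission
  imports Defs
begin

text \<open>Rotating the grid by 180 degrees, \<open>(i, j) \<mapsto> (n + 2 - i, m - j)\<close>, and reversing every
  edge maps \<open>H(n,m)\<close> onto itself, turning the sources \<open>(i, 0)\<close> into the sinks \<open>(n + 2 - i, m)\<close>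
  and vice versa. Transporting a flow along this edge involution negates netflows and
  reverses their order, so it maps \<open>\<F>(a', b')\<close> onto \<open>\<F>(rev b', rev a')\<close>. As a permutation of
  coordinates it is linear, preserves the lattice and is its own inverse, which gives the
  integral equivalence.\<close>

definition coord_perm :: "'e set \<Rightarrow> ('e \<Rightarrow> 'e) \<Rightarrow> ('e \<Rightarrow> real) \<Rightarrow> ('e \<Rightarrow> real)" where
  "coord_perm E \<tau> x = (\<lambda>e. if e \<in> E then x (\<tau> e) else 0)"

lemma affine_map_on_coord_perm:
  assumes "finite E" and "\<And>e. e \<in> E \<Longrightarrow> \<tau> e \<in> E"
  shows "affine_map_on E (coord_perm E \<tau>)"
proof -
  define L where "L e e' = (if e \<in> E \<and> e' = \<tau> e then 1 else (0::real))" for e e'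
  have "coord_perm E \<tau> x e = 0 + (\<Sum>e' \<in> E. L e e' * x e')" for x e
  proof (cases "e \<in> E")
    case True
    then have "(\<Sum>e' \<in> E. L e e' * x e') = (\<Sum>e' \<in> E. if e' = \<tau> e then x e' else 0)"
      by (intro sum.cong) (auto simp: L_def)
    also have "\<dots> = x (\<tau> e)"
      using assms True by (simp add: sum.delta')
    finally show ?thesis
      using True by (simp add: coord_perm_def)
  qed (simp add: coord_perm_def L_def)
  then show ?thesis
    unfolding affine_map_on_def by (intro exI[of _ "\<lambda>_. 0"] exI[of _ L]) (simp add: fun_eq_iff)
qed

lemma coord_perm_int_points: "x \<in> int_points \<Longrightarrow> coord_perm E \<tau> x \<in> int_points"
  by (simp add: int_points_def coord_perm_def)

lemma coord_perm_aff_hull: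
  assumes "coord_perm E \<tau> ` S \<subseteq> T"
  shows "coord_perm E \<tau> ` aff_hull S \<subseteq> aff_hull T"
proof
  fix y assume "y \<in> coord_perm E \<tau> ` aff_hull S"
  then obtain k :: nat and p c where
    p: "\<forall>i<k. p i \<in> S" and c: "(\<Sum>i<k. c i) = 1" and
    y: "y = coord_perm E \<tau> (\<lambda>e. \<Sum>i<k. c i * p i e)"
    unfolding aff_hull_def by blast
  have "y = (\<lambda>e. \<Sum>i<k. c i * coord_perm E \<tau> (p i) e)"
    by (auto simp: y coord_perm_def)
  moreover have "\<forall>i<k. coord_perm E \<tau> (p i) \<in> T"
    using p assms by blast
  ultimately show "y \<in> aff_hull T"
    unfolding aff_hull_def using c
    by (intro CollectI exI[of _ k] exI[of _ "\<lambda>i. coord_perm E \<tau> (p i)"] exI[of _ c]) simp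
qed

lemma aff_hull_vanishing_off:
  assumes "\<And>p e. p \<in> S \<Longrightarrow> e \<notin> E \<Longrightarrow> p e = 0"
    and "x \<in> aff_hull S" and "e \<notin> E"
  shows "x e = 0"
  using assms unfolding aff_hull_def by (fastforce intro: sum.neutral)

lemma coord_perm_involution:
  assumes "\<And>e. e \<in> E \<Longrightarrow> \<tau> e \<in> E" and "\<And>e. e \<in> E \<Longrightarrow> \<tau> (\<tau> e) = e"
    and "\<And>e. e \<notin> E \<Longrightarrow> x e = 0"
  shows "coord_perm E \<tau> (coord_perm E \<tau> x) = x"
  using assms by (auto simp: coord_perm_def)

lemma integrally_equivalent_coord_perm:
  assumes "finite E"
    and \<tau>_in: "\<And>e. e \<in> E \<Longrightarrow> \<tau> e \<in> E" and \<tau>_\<tau>: "\<And>e. e \<in> E \<Longrightarrow> \<tau> (\<tau> e) = e"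
    and P: "\<And>x e. x \<in> P \<Longrightarrow> e \<notin> E \<Longrightarrow> x e = 0"
    and Q: "\<And>x e. x \<in> Q \<Longrightarrow> e \<notin> E \<Longrightarrow> x e = 0"
    and PQ: "coord_perm E \<tau> ` P \<subseteq> Q" and QP: "coord_perm E \<tau> ` Q \<subseteq> P"
  shows "integrally_equivalent E P Q"
proof -
  let ?\<phi> = "coord_perm E \<tau>"
  have hull_P: "x e = 0" if "x \<in> aff_hull P" "e \<notin> E" for x e
    using aff_hull_vanishing_off[of P E] P that by blast
  have hull_Q: "x e = 0" if "x \<in> aff_hull Q" "e \<notin> E" for x e
    using aff_hull_vanishing_off[of Q E] Q that by blast
  have "bij_betw ?\<phi> P Q"
    by (rule bij_betw_byWitness[where f' = ?\<phi>])
      (use PQ QP P Q coord_perm_involution[OF \<tau>_in \<tau>_\<tau>] in auto)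
  moreover have "bij_betw ?\<phi> (aff_hull P \<inter> int_points) (aff_hull Q \<inter> int_points)"
    by (rule bij_betw_byWitness[where f' = ?\<phi>])
      (use coord_perm_aff_hull[OF PQ] coord_perm_aff_hull[OF QP] coord_perm_int_points
         hull_P hull_Q coord_perm_involution[OF \<tau>_in \<tau>_\<tau>] in auto)
  moreover have "affine_map_on E ?\<phi>"
    using \<open>finite E\<close> \<tau>_in by (rule affine_map_on_coord_perm)
  ultimately show ?thesis
    unfolding integrally_equivalent_def by blast
qed

definition reverse_edge :: "('v \<Rightarrow> 'v) \<Rightarrow> 'v \<times> 'v \<Rightarrow> 'v \<times> 'v" where
  "reverse_edge \<rho> e = (\<rho> (snd e), \<rho> (fst e))"

definition net_flow :: "('v \<times> 'v) set \<Rightarrow> ('v \<times> 'v \<Rightarrow> real) \<Rightarrow> 'v \<Rightarrow> real" where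
  "net_flow E f v = (\<Sum>e \<in> {e \<in> E. fst e = v}. f e) - (\<Sum>e \<in> {e \<in> E. snd e = v}. f e)"

definition flow_polytope :: "('v \<times> 'v) set \<Rightarrow> 'v set \<Rightarrow> ('v \<Rightarrow> real) \<Rightarrow> ('v \<times> 'v \<Rightarrow> real) set" where
  "flow_polytope E V d =
     {f. (\<forall>e. e \<notin> E \<longrightarrow> f e = 0) \<and> (\<forall>e \<in> E. 0 \<le> f e) \<and> (\<forall>v \<in> V. net_flow E f v = d v)}"

lemma flow_polytope_H_eq: "flow_polytope_H n m a b = flow_polytope (H_edges n m) (H_vertices n m) (H_netflow m a b)"
  by (simp add: flow_polytope_H_def flow_polytope_def net_flow_def)

locale edge_reversing_involution =
  fixes V :: "'v set" and E :: "('v \<times> 'v) set" and \<rho> :: "'v \<Rightarrow> 'v"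
  assumes edge_ends: "e \<in> E \<Longrightarrow> fst e \<in> V \<and> snd e \<in> V"
    and \<rho>_in: "v \<in> V \<Longrightarrow> \<rho> v \<in> V"
    and \<rho>_\<rho>: "v \<in> V \<Longrightarrow> \<rho> (\<rho> v) = v"
    and reverse_edge_in: "e \<in> E \<Longrightarrow> reverse_edge \<rho> e \<in> E"
begin

lemma reverse_edge_reverse_edge: "e \<in> E \<Longrightarrow> reverse_edge \<rho> (reverse_edge \<rho> e) = e"
  using edge_ends by (simp add: reverse_edge_def \<rho>_\<rho>)

lemma sum_coord_perm_reverse_edge:
  assumes "A \<subseteq> E"
  shows "(\<Sum>e \<in> A. coord_perm E (reverse_edge \<rho>) f e) = (\<Sum>e \<in> reverse_edge \<rho> ` A. f e)"
proof -
  have "inj_on (reverse_edge \<rho>) A"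
    using assms by (metis inj_onI reverse_edge_reverse_edge subsetD)
  have "(\<Sum>e \<in> A. coord_perm E (reverse_edge \<rho>) f e) = (\<Sum>e \<in> A. f (reverse_edge \<rho> e))"
    using assms by (intro sum.cong) (auto simp: coord_perm_def)
  also have "\<dots> = (\<Sum>e \<in> reverse_edge \<rho> ` A. f e)"
    using \<open>inj_on (reverse_edge \<rho>) A\<close> by (simp add: sum.reindex)
  finally show ?thesis .
qed

lemma reverse_edge_image_out:
  assumes "v \<in> V"
  shows "reverse_edge \<rho> ` {e \<in> E. fst e = v} = {e \<in> E. snd e = \<rho> v}"
proof (intro equalityI subsetI)
  fix e assume e: "e \<in> {e \<in> E. snd e = \<rho> v}"
  show "e \<in> reverse_edge \<rho> ` {e \<in> E. fst e = v}"
  proof (rule image_eqI)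
    show "e = reverse_edge \<rho> (reverse_edge \<rho> e)"
      using e reverse_edge_reverse_edge by simp
    show "reverse_edge \<rho> e \<in> {e \<in> E. fst e = v}"
      using e assms reverse_edge_in[of e] by (auto simp: reverse_edge_def \<rho>_\<rho>)
  qed
qed (use reverse_edge_in in \<open>auto simp: reverse_edge_def\<close>)

lemma reverse_edge_image_in:
  assumes "v \<in> V"
  shows "reverse_edge \<rho> ` {e \<in> E. snd e = v} = {e \<in> E. fst e = \<rho> v}"
proof (intro equalityI subsetI)
  fix e assume e: "e \<in> {e \<in> E. fst e = \<rho> v}"
  show "e \<in> reverse_edge \<rho> ` {e \<in> E. snd e = v}"
  proof (rule image_eqI)
    show "e = reverse_edge \<rho> (reverse_edge \<rho> e)"
      using e reverse_edge_reverse_edge by simp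
    show "reverse_edge \<rho> e \<in> {e \<in> E. snd e = v}"
      using e assms reverse_edge_in[of e] by (auto simp: reverse_edge_def \<rho>_\<rho>)
  qed
qed (use reverse_edge_in in \<open>auto simp: reverse_edge_def\<close>)

lemma net_flow_coord_perm:
  assumes "v \<in> V"
  shows "net_flow E (coord_perm E (reverse_edge \<rho>) f) v = - net_flow E f (\<rho> v)"
  using assms by (simp add: net_flow_def sum_coord_perm_reverse_edge
      reverse_edge_image_out reverse_edge_image_in)

lemma coord_perm_flow_polytope:
  assumes "\<And>v. v \<in> V \<Longrightarrow> d' v = - d (\<rho> v)"
  shows "coord_perm E (reverse_edge \<rho>) ` flow_polytope E V d \<subseteq> flow_polytope E V d'"
  using assms reverse_edge_in \<rho>_in
  by (auto simp: flow_polytope_def net_flow_coord_perm) (auto simp: coord_perm_def)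

theorem integrally_equivalent_flow_polytope:
  assumes "finite E" and d': "\<And>v. v \<in> V \<Longrightarrow> d' v = - d (\<rho> v)"
  shows "integrally_equivalent E (flow_polytope E V d) (flow_polytope E V d')"
proof (rule integrally_equivalent_coord_perm)
  have "d v = - d' (\<rho> v)" if "v \<in> V" for v
    using that by (simp add: d' \<rho>_in \<rho>_\<rho>)
  then show "coord_perm E (reverse_edge \<rho>) ` flow_polytope E V d' \<subseteq> flow_polytope E V d"
    by (rule coord_perm_flow_polytope)
qed (use assms reverse_edge_in reverse_edge_reverse_edge coord_perm_flow_polytope
       in \<open>auto simp: flow_polytope_def\<close>)

end

definition grid_rotation :: "nat \<Rightarrow> nat \<Rightarrow> vert \<Rightarrow> vert" where
  "grid_rotation n m v = (n + 2 - fst v, m - snd v)"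

interpretation H: edge_reversing_involution "H_vertices n m" "H_edges n m" "grid_rotation n m"
  for n m
  by unfold_locales
    (auto simp: H_vertices_def H_edges_def grid_rotation_def reverse_edge_def)

lemma finite_H_edges: "finite (H_edges n m)"
proof (rule finite_subset)
  show "H_edges n m \<subseteq> ({0..n+1} \<times> {0..m}) \<times> ({0..n+1} \<times> {0..m})"
    unfolding H_edges_def by auto
qed auto

lemma H_netflow_grid_rotation:
  assumes "v \<in> H_vertices n m"
    and "\<forall>i \<in> {1..n+1}. a' i = b (n + 2 - i) \<and> b' i = a (n + 2 - i)"
  shows "H_netflow m a' b' v = - H_netflow m a b (grid_rotation n m v)"
  using assms by (auto simp: H_vertices_def H_netflow_def grid_rotation_def)

theorem proposition7p4:
  fixes n m :: nat and a b :: "nat \<Rightarrow> int"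
  assumes "n \<ge> 1" and "m \<ge> 1"
    and "(\<Sum>i = 1..n+1. a i) = (\<Sum>i = 1..n+1. b i)"
  shows "integrally_equivalent (H_edges n m)
           (flow_polytope_H n m a b)
           (flow_polytope_H n m (rev_vec n b) (rev_vec n a))"
  unfolding flow_polytope_H_eq
  by (rule H.integrally_equivalent_flow_polytope[OF finite_H_edges],
      rule H_netflow_grid_rotation) (auto simp: rev_vec_def)

end
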